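(* Consider $\mathrm{USD}_p$ with $p\in[0,1]$ and let $\xi>0$ be a constant. Let $\Phi_{up}(t) := u(t) - x_1(t) - x_2(t)$ and $T_u := \inf\{t \geq 0 : \Phi_{up}(t) > 6\xi\sqrt{n\log n}\}$. Let $\mathbf{x}(0)$ be an arbitrary configuration with $\Phi_{up}(0) < 2\xi\sqrt{n\log n}$. Then with high probability $T_u = \omega(n\log^2 n)$.
   Context: Population protocol with $n$ agents, each in a state from $\{1,2,\bot\}$ (Opinion 1, Opinion 2, undecided). At each time step a scheduler picks an ordered pair $(i,j)$ of agents uniformly at random, independently of the past; only the initiator $i$ changes state. In $\mathrm{USD}_p$: if the initiator is $2$ and the responder $1$, the initiator becomes $\bot$; if the initiator is $1$ and the responder $2$, the initiator becomes $\bot$ with probability $1-p$ and otherwise stays $1$; if the initiator is $\bot$, it adopts the responder's state; otherwise nothing changes. $x_1(t),x_2(t),u(t)$ are the numbers of agents in states $1,2,\bot$ after $t$ interactions. "With high probability" means with probability at least $1-n^{-c}$ for a constant $c>0$. *)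

theory Defs
  imports "HOL-Probability.Probability"
begin

datatype st = One | Two | Und

text \<open>Local transition of the initiator in USD_p, given initiator state a and responder state b.\<close>
definition usd_delta :: "real \<Rightarrow> st \<Rightarrow> st \<Rightarrow> st pmf" where
  "usd_delta p a b = (case (a, b) of
      (Two, One) \<Rightarrow> return_pmf Und
    | (One, Two) \<Rightarrow> map_pmf (\<lambda>keep. if keep then One else Und) (bernoulli_pmf p)
    | (Und, c) \<Rightarrow> return_pmf c
    | _ \<Rightarrow> return_pmf a)"

text \<open>Configurations of n agents 0..n-1: functions nat => st (values at i >= n are irrelevant).
  One interaction: an ordered pair of distinct agents is chosen uniformly at random.\<close>
definition usd_step :: "real \<Rightarrow> nat \<Rightarrow> (nat \<Rightarrow> st) \<Rightarrow> (nat \<Rightarrow> st) pmf" where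
  "usd_step p n x = do {
      ij \<leftarrow> pmf_of_set {(i, j). i < n \<and> j < n \<and> i \<noteq> j};
      s \<leftarrow> usd_delta p (x (fst ij)) (x (snd ij));
      return_pmf (x(fst ij := s))
   }"

definition cnt :: "nat \<Rightarrow> (nat \<Rightarrow> st) \<Rightarrow> st \<Rightarrow> nat" where
  "cnt n x s = card {i. i < n \<and> x i = s}"

definition phi_up :: "nat \<Rightarrow> (nat \<Rightarrow> st) \<Rightarrow> real" where
  "phi_up n x = real (cnt n x Und) - real (cnt n x One) - real (cnt n x Two)"

text \<open>stay p n A m x = probability that the chain started in x satisfies x(t) \<in> A for all t < m.\<close>
fun stay :: "real \<Rightarrow> nat \<Rightarrow> (nat \<Rightarrow> st) set \<Rightarrow> nat \<Rightarrow> (nat \<Rightarrow> st) \<Rightarrow> real" where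
  "stay p n A 0 x = 1"
| "stay p n A (Suc m) x =
     (if x \<in> A then measure_pmf.expectation (usd_step p n x) (stay p n A m) else 0)"

end

theory Submission
  imports Defs "HOL-Real_Asymp.Real_Asymp"
begin

(* Let W(x) = 2 powr ((Phi_up(x) - H) / 2). An interaction changes Phi_up by -2, 0 or 2, and
   averaging over the n(n-1) ordered pairs gives
     E[W(next)] = W(x) (1 + ((2 - p) x_1 x_2 - u (x_1 + x_2) / 2) / (n(n-1))).
   If Phi_up >= 0, i.e. u >= x_1 + x_2, the bracket is nonpositive because
   (2 - p) x_1 x_2 <= (x_1 + x_2)^2 / 2; if Phi_up < 0, then W <= 2 powr (-H/2) and the factor
   is at most 2. So W grows in expectation by at most 2 powr (-H/2) per step, and as W >= 1 above H,
   the probability of exceeding H within m steps is at most W(x(0)) + m 2 powr (-H/2).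
   For H = 6 xi sqrt(n ln n), Phi_up(0) < 2 xi sqrt(n ln n) and m = n^3 + 1 this is
   2 powr (-2 xi sqrt(n ln n)) + (n^3 + 1) 2 powr (-3 xi sqrt(n ln n)) <= 1/n eventually,
   while n^3 = omega(n log^2 n). *)

lemma finite_UNIV_st [simp]: "finite (UNIV :: st set)"
proof (rule finite_subset)
  show "(UNIV :: st set) \<subseteq> {One, Two, Und}"
    using st.exhaust by auto
qed simp

definition agent_pairs :: "nat \<Rightarrow> (nat \<times> nat) set" where
  "agent_pairs n = {(i, j). i < n \<and> j < n \<and> i \<noteq> j}"

lemma finite_agent_pairs: "finite (agent_pairs n)"
  unfolding agent_pairs_def by (rule finite_subset[of _ "{..<n} \<times> {..<n}"]) auto

lemma card_agent_pairs_pos: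
  assumes "n \<ge> 2"
  shows "card (agent_pairs n) > 0"
proof -
  have "(0, 1) \<in> agent_pairs n"
    using assms by (simp add: agent_pairs_def)
  then show ?thesis
    using finite_agent_pairs by (auto simp: card_gt_0_iff)
qed

lemma usd_step_eq_bind:
  "usd_step p n x = pmf_of_set (agent_pairs n) \<bind>
     (\<lambda>(i, j). map_pmf (\<lambda>s. x(i := s)) (usd_delta p (x i) (x j)))"
  unfolding usd_step_def agent_pairs_def map_pmf_def by (intro bind_pmf_cong) auto

lemma finite_set_pmf_usd_delta: "finite (set_pmf (usd_delta p a b))"
  by (rule finite_subset[OF subset_UNIV]) simp

lemma finite_set_pmf_usd_step:
  assumes "n \<ge> 2"
  shows "finite (set_pmf (usd_step p n x))"
  using assms finite_agent_pairs[of n] card_agent_pairs_pos[of n]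
  by (auto simp: usd_step_eq_bind card_gt_0_iff finite_set_pmf_usd_delta)

lemma expectation_usd_step:
  assumes "n \<ge> 2"
  shows "measure_pmf.expectation (usd_step p n x) f =
    (\<Sum>(i, j)\<in>agent_pairs n. measure_pmf.expectation (usd_delta p (x i) (x j)) (\<lambda>s. f (x(i := s))))
      / real (card (agent_pairs n))"
  unfolding usd_step_eq_bind
  using assms finite_agent_pairs[of n] card_agent_pairs_pos[of n]
  by (subst pmf_expectation_bind_pmf_of_set)
    (auto simp: card_gt_0_iff split_beta sum_distrib_left divide_inverse_commute finite_set_pmf_usd_delta)

lemma exit_probability_le_potential:
  assumes "n \<ge> 2" "\<epsilon> \<ge> 0"
    and nonneg: "\<And>y. V y \<ge> 0"
    and outside: "\<And>y. y \<notin> A \<Longrightarrow> V y \<ge> 1"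
    and drift: "\<And>y. y \<in> A \<Longrightarrow> measure_pmf.expectation (usd_step p n y) V \<le> V y + \<epsilon>"
  shows "1 - stay p n A m x \<le> V x + real m * \<epsilon>"
proof (induction m arbitrary: x)
  case 0
  then show ?case using nonneg by simp
next
  case (Suc m)
  show ?case
  proof (cases "x \<in> A")
    case False
    then show ?thesis
      using outside[of x] \<open>\<epsilon> \<ge> 0\<close> by (simp add: add_increasing2)
  next
    case True
    let ?M = "usd_step p n x"
    have int: "integrable ?M f" for f :: "(nat \<Rightarrow> st) \<Rightarrow> real"
      using finite_set_pmf_usd_step[OF \<open>n \<ge> 2\<close>] by (rule integrable_measure_pmf_finite)
    have "1 - stay p n A (Suc m) x = measure_pmf.expectation ?M (\<lambda>y. 1 - stay p n A m y)"
      using True by (simp add: int)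
    also have "\<dots> \<le> measure_pmf.expectation ?M (\<lambda>y. V y + real m * \<epsilon>)"
      by (intro integral_mono int Suc.IH)
    also have "\<dots> = measure_pmf.expectation ?M V + real m * \<epsilon>"
      by (simp add: int)
    also have "\<dots> \<le> V x + real (Suc m) * \<epsilon>"
      using drift[OF True] by (simp add: algebra_simps)
    finally show ?thesis .
  qed
qed

fun phi_weight :: "st \<Rightarrow> real" where
  "phi_weight Und = 1"
| "phi_weight One = -1"
| "phi_weight Two = -1"

lemma cnt_eq_sum: "real (cnt n x s) = (\<Sum>k<n. of_bool (x k = s))"
proof -
  have "{..<n} \<inter> {k. x k = s} = {k. k < n \<and> x k = s}"
    by auto
  then show ?thesis
    by (simp add: cnt_def)
qed

lemma phi_up_eq_sum: "phi_up n x = (\<Sum>k<n. phi_weight (x k))"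
proof -
  have "phi_weight s = of_bool (s = Und) - of_bool (s = One) - of_bool (s = Two)" for s
    by (cases s) simp_all
  then show ?thesis
    by (simp add: phi_up_def cnt_eq_sum sum_subtractf)
qed

lemma phi_up_fun_upd:
  assumes "i < n"
  shows "phi_up n (x(i := s)) = phi_up n x - phi_weight (x i) + phi_weight s"
proof -
  have "(\<Sum>k\<in>{..<n} - {i}. phi_weight ((x(i := s)) k)) = (\<Sum>k\<in>{..<n} - {i}. phi_weight (x k))"
    by (rule sum.cong) auto
  then show ?thesis
    using assms by (simp add: phi_up_eq_sum sum.remove[of "{..<n}" i])
qed

definition potential_factor :: "real \<Rightarrow> st \<Rightarrow> st \<Rightarrow> real" where
  "potential_factor p a b =
     1 + of_bool (a = Two \<and> b = One) + (1 - p) * of_bool (a = One \<and> b = Two)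
       - of_bool (a = Und \<and> b \<noteq> Und) / 2"

lemma expectation_usd_delta_potential:
  assumes "0 \<le> p" "p \<le> 1"
  shows "measure_pmf.expectation (usd_delta p a b) (\<lambda>s. 2 powr ((phi_weight s - phi_weight a) / 2))
    = potential_factor p a b"
  using assms by (cases a; cases b) (simp_all add: usd_delta_def potential_factor_def powr_minus)

lemma potential_factor_le_2: "0 \<le> p \<Longrightarrow> potential_factor p a b \<le> 2"
  by (simp add: potential_factor_def)

lemma sum_agent_pairs_of_bool:
  assumes "Sa \<inter> Sb = {}"
  shows "(\<Sum>(i, j)\<in>agent_pairs n. of_bool (x i \<in> Sa \<and> x j \<in> Sb))
     = real (card {i. i < n \<and> x i \<in> Sa}) * real (card {j. j < n \<and> x j \<in> Sb})"
proof -
  have "agent_pairs n \<inter> {ij. x (fst ij) \<in> Sa \<and> x (snd ij) \<in> Sb}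
      = {i. i < n \<and> x i \<in> Sa} \<times> {j. j < n \<and> x j \<in> Sb}"
    using assms by (auto simp: agent_pairs_def)
  then show ?thesis
    using finite_agent_pairs by (simp add: split_beta card_cartesian_product)
qed

lemma sum_potential_factor:
  "(\<Sum>(i, j)\<in>agent_pairs n. potential_factor p (x i) (x j)) =
     real (card (agent_pairs n)) + (2 - p) * real (cnt n x One) * real (cnt n x Two)
       - real (cnt n x Und) * (real (cnt n x One) + real (cnt n x Two)) / 2"
proof -
  have factor: "potential_factor p a b = 1 + of_bool (a \<in> {Two} \<and> b \<in> {One})
      + (1 - p) * of_bool (a \<in> {One} \<and> b \<in> {Two}) - of_bool (a \<in> {Und} \<and> b \<in> {One, Two}) / 2" for a b
    by (cases b) (simp_all add: potential_factor_def)
  have single: "card {i. i < n \<and> x i \<in> {s}} = cnt n x s" for s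
    by (simp add: cnt_def)
  have "{i. i < n \<and> x i \<in> {One, Two}} = {i. i < n \<and> x i = One} \<union> {i. i < n \<and> x i = Two}"
    by auto
  then have decided: "card {i. i < n \<and> x i \<in> {One, Two}} = cnt n x One + cnt n x Two"
    by (simp add: cnt_def card_Un_disjoint disjoint_iff)
  have disjoint: "{Two} \<inter> {One} = {}" "{One} \<inter> {Two} = {}" "{Und} \<inter> {One, Two} = {}"
    by auto
  have "(\<Sum>(i, j)\<in>agent_pairs n. potential_factor p (x i) (x j)) =
      real (card (agent_pairs n))
      + (\<Sum>(i, j)\<in>agent_pairs n. of_bool (x i \<in> {Two} \<and> x j \<in> {One}))
      + (1 - p) * (\<Sum>(i, j)\<in>agent_pairs n. of_bool (x i \<in> {One} \<and> x j \<in> {Two}))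
      - (\<Sum>(i, j)\<in>agent_pairs n. of_bool (x i \<in> {Und} \<and> x j \<in> {One, Two})) / 2"
    unfolding factor
    by (simp add: split_beta sum.distrib sum_subtractf sum_distrib_left sum_divide_distrib)
  also have "\<dots> = real (card (agent_pairs n)) + (2 - p) * real (cnt n x One) * real (cnt n x Two)
       - real (cnt n x Und) * (real (cnt n x One) + real (cnt n x Two)) / 2"
    using sum_agent_pairs_of_bool[OF disjoint(1), of x n, unfolded single]
      sum_agent_pairs_of_bool[OF disjoint(2), of x n, unfolded single]
      sum_agent_pairs_of_bool[OF disjoint(3), of x n, unfolded single decided]
    by (simp only:) (simp add: algebra_simps)
  finally show ?thesis .
qed

lemma sum_potential_factor_le_card:
  assumes "0 \<le> p" "phi_up n x \<ge> 0"
  shows "(\<Sum>(i, j)\<in>agent_pairs n. potential_factor p (x i) (x j)) \<le> real (card (agent_pairs n))"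
proof -
  define a b u where "a = real (cnt n x One)" and "b = real (cnt n x Two)" and "u = real (cnt n x Und)"
  have "a \<ge> 0" "b \<ge> 0" "a + b \<le> u"
    using assms(2) by (simp_all add: a_def b_def u_def phi_up_def)
  have "(2 - p) * a * b \<le> 2 * a * b"
    using assms(1) \<open>a \<ge> 0\<close> \<open>b \<ge> 0\<close> by (simp add: mult_right_mono)
  also have "\<dots> \<le> (a + b) * (a + b) / 2"
    using sum_squares_ge_zero[of "a - b" 0] by (simp add: algebra_simps power2_eq_square)
  also have "\<dots> \<le> u * (a + b) / 2"
    using \<open>a \<ge> 0\<close> \<open>b \<ge> 0\<close> \<open>a + b \<le> u\<close> by (simp add: mult_right_mono)
  finally show ?thesis
    by (simp add: sum_potential_factor a_def b_def u_def)
qed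

definition exit_potential :: "nat \<Rightarrow> real \<Rightarrow> (nat \<Rightarrow> st) \<Rightarrow> real" where
  "exit_potential n H x = 2 powr ((phi_up n x - H) / 2)"

lemma exit_potential_fun_upd:
  assumes "i < n"
  shows "exit_potential n H (x(i := s)) = exit_potential n H x * 2 powr ((phi_weight s - phi_weight (x i)) / 2)"
  unfolding exit_potential_def phi_up_fun_upd[OF assms] powr_add[symmetric]
  by (rule arg_cong[where f = "(powr) 2"]) (simp add: field_simps)

lemma expectation_exit_potential:
  assumes "0 \<le> p" "p \<le> 1" "n \<ge> 2"
  shows "measure_pmf.expectation (usd_step p n x) (exit_potential n H) =
    exit_potential n H x * (\<Sum>(i, j)\<in>agent_pairs n. potential_factor p (x i) (x j)) / real (card (agent_pairs n))"
proof -
  have "measure_pmf.expectation (usd_delta p (x i) (x j)) (\<lambda>s. exit_potential n H (x(i := s)))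
      = exit_potential n H x * potential_factor p (x i) (x j)" if "(i, j) \<in> agent_pairs n" for i j
    using that assms(1,2)
    by (simp add: agent_pairs_def exit_potential_fun_upd expectation_usd_delta_potential)
  then show ?thesis
    by (simp add: expectation_usd_step[OF assms(3)] sum_distrib_left split_beta cong: sum.cong)
qed

lemma exit_potential_drift:
  assumes "0 \<le> p" "p \<le> 1" "n \<ge> 2"
  shows "measure_pmf.expectation (usd_step p n x) (exit_potential n H)
    \<le> exit_potential n H x + 2 powr (- H / 2)"
proof -
  let ?N = "real (card (agent_pairs n))"
  let ?F = "(\<Sum>(i, j)\<in>agent_pairs n. potential_factor p (x i) (x j)) / ?N"
  let ?W = "exit_potential n H x"
  have "?N > 0"
    using card_agent_pairs_pos[OF assms(3)] by simp
  have "?W \<ge> 0"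
    by (simp add: exit_potential_def)
  have "?W * ?F \<le> ?W + 2 powr (- H / 2)"
  proof (cases "phi_up n x \<ge> 0")
    case True
    then have "?F \<le> 1"
      using sum_potential_factor_le_card[OF assms(1) True] \<open>?N > 0\<close> by simp
    then have "?W * ?F \<le> ?W"
      using \<open>?W \<ge> 0\<close> by (rule mult_left_le)
    then show ?thesis
      using powr_ge_zero[of 2 "- H / 2"] by linarith
  next
    case False
    have "(\<Sum>(i, j)\<in>agent_pairs n. potential_factor p (x i) (x j)) \<le> (\<Sum>_\<in>agent_pairs n. 2)"
      by (rule sum_mono) (simp add: split_beta potential_factor_le_2 assms(1))
    then have "?F \<le> 2"
      using \<open>?N > 0\<close> by (simp add: divide_le_eq)
    then have "?W * ?F \<le> ?W + ?W"
      using \<open>?W \<ge> 0\<close> mult_left_mono[of ?F 2 ?W] by simp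
    moreover have "?W \<le> 2 powr (- H / 2)"
      unfolding exit_potential_def using False by (intro powr_mono) auto
    ultimately show ?thesis
      by simp
  qed
  then show ?thesis
    by (simp add: expectation_exit_potential[OF assms])
qed

lemma exit_probability_phi_up_le:
  assumes "0 \<le> p" "p \<le> 1" "n \<ge> 2" "phi_up n x \<le> h"
  shows "1 - stay p n {y. phi_up n y \<le> H} m x \<le> 2 powr ((h - H) / 2) + real m * 2 powr (- H / 2)"
proof -
  have "1 - stay p n {y. phi_up n y \<le> H} m x \<le> exit_potential n H x + real m * 2 powr (- H / 2)"
  proof (rule exit_probability_le_potential[OF assms(3)])
    show "exit_potential n H y \<ge> 1" if "y \<notin> {y. phi_up n y \<le> H}" for y
      using that by (simp add: exit_potential_def ge_one_powr_ge_zero)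
    show "measure_pmf.expectation (usd_step p n y) (exit_potential n H)
        \<le> exit_potential n H y + 2 powr (- H / 2)" for y
      by (rule exit_potential_drift[OF assms(1-3)])
  qed (simp_all add: exit_potential_def)
  moreover have "exit_potential n H x \<le> 2 powr ((h - H) / 2)"
    unfolding exit_potential_def using assms(4) by (intro powr_mono) auto
  ultimately show ?thesis
    by linarith
qed

theorem lemma10:
  fixes p \<xi> :: real
  assumes "0 \<le> p" "p \<le> 1" "\<xi> > 0"
  shows "\<exists>c>0. \<exists>g :: nat \<Rightarrow> nat.
           filterlim (\<lambda>n. real (g n) / (real n * (ln (real n))\<^sup>2)) at_top sequentially \<and>
           (\<forall>\<^sub>F n in sequentially. \<forall>x :: nat \<Rightarrow> st.
              phi_up n x < 2 * \<xi> * sqrt (real n * ln (real n)) \<longrightarrow>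
              1 - stay p n {y. phi_up n y \<le> 6 * \<xi> * sqrt (real n * ln (real n))} (g n + 1) x
                \<le> real n powr (- c))"
proof (intro exI conjI)
  show "(1::real) > 0"
    by simp
  show "filterlim (\<lambda>n. real (n ^ 3) / (real n * (ln (real n))\<^sup>2)) at_top sequentially"
    by real_asymp
  let ?s = "\<lambda>n. sqrt (real n * ln (real n))"
  have "\<forall>\<^sub>F n in sequentially.
      2 powr ((2 * \<xi> * ?s n - 6 * \<xi> * ?s n) / 2) + real (n ^ 3 + 1) * 2 powr (- (6 * \<xi> * ?s n) / 2)
        \<le> real n powr (- 1)"
    using assms(3) by real_asymp
  with eventually_ge_at_top[of 2]
  show "\<forall>\<^sub>F n in sequentially. \<forall>x :: nat \<Rightarrow> st.
      phi_up n x < 2 * \<xi> * ?s n \<longrightarrow>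
      1 - stay p n {y. phi_up n y \<le> 6 * \<xi> * ?s n} (n ^ 3 + 1) x \<le> real n powr (- 1)"
  proof eventually_elim
    case (elim n)
    show ?case
    proof (intro allI impI)
      fix x
      assume "phi_up n x < 2 * \<xi> * ?s n"
      then show "1 - stay p n {y. phi_up n y \<le> 6 * \<xi> * ?s n} (n ^ 3 + 1) x \<le> real n powr (- 1)"
        by (rule order_trans[OF exit_probability_phi_up_le[OF assms(1,2) elim(1) less_imp_le] elim(2)])
    qed
  qed
qed

end
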